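(* Let $\mathcal I$ be an instance of $\mathrm{CSP}(\Gamma_0)$ on variables $u_1,\dots,u_n$, whose constraints are of the forms $(u_i=u_j\vee u_k=0)$, $(u_i=u_j\vee u_k=1)$, $u_i=1$, $u_i=0$ (interpreted over $\{0,1\}$). Let $\mathcal J$ be the instance on the $3n+3$ variables $x,x',y',x_1,\dots,x_n,y_1,\dots,y_n,z_1,\dots,z_n$ over the domain $\{0,1,2\}$ consisting of the following constraints (all indices range over $[n]=\{1,\dots,n\}$): $\mathcal C_1$: $N(x,x_i,y_i)$ for all $i$; $\mathcal C_2$: $N(x',z_i,y_i)$ for all $i$; $\mathcal C_3$: $N(y',z_i,x_i)$ for all $i$; $\mathcal C_4$: $N(t_1,t_2,t_3)$ for all $t_1,t_2,t_3\in\{x,x',x_1,\dots,x_n\}$; $\mathcal C_5$: $N(t_1,t_2,t_3)$ for all $t_1,t_2,t_3\in\{x,y',y_1,\dots,y_n\}$; $\mathcal C_6$: $N(t_1,t_2,t_3)$ for all $t_1,t_2,t_3\in\{x',y',z_1,\dots,z_n\}$; $\mathcal C_7$: $N(x_i,y_j,z_i)$ for all $i,j$; $\mathcal C_8$: $N(x_i,y_j,z_j)$ for all $i,j$; $\mathcal C_9$: $N(x,x_i,z_i)$ for all $i$; $\mathcal C_{10}$: $N(x,y_i,z_i)$ for all $i$; $\mathcal C_{11}$: $N(x_i,x_j,y_k)$ for each constraint $(u_i=u_j\vee u_k=0)$ of $\mathcal I$; $\mathcal C_{12}$: $N(y_i,y_j,x_k)$ for each constraint $(u_i=u_j\vee u_k=1)$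 of $\mathcal I$; $\mathcal C_{13}$: $x=x_i$ for each constraint $u_i=1$ of $\mathcal I$; $\mathcal C_{14}$: $x=y_i$ for each constraint $u_i=0$ of $\mathcal I$. Then $\mathcal I$ has a solution if and only if $\mathcal J$ has a surjective solution, i.e. an assignment of values in $\{0,1,2\}$ to all $3n+3$ variables satisfying all constraints of $\mathcal J$ and taking every value $0,1,2$.
   Context: $N=\{(a,b,c)\in\{0,1,2\}^{3}\mid \{a,b,c\}\neq\{0,1,2\}\}$, i.e. $N(a,b,c)$ holds iff $a,b,c$ are not pairwise distinct. $\Gamma_0$ is the constraint language on $\{0,1\}$ consisting of the relations $\{(x,y,z)\mid x=y\text{ or }z=0\}$, $\{(x,y,z)\mid x=y\text{ or }z=1\}$, $\{0\}$, $\{1\}$. A solution of $\mathcal I$ is an assignment $u_1,\dots,u_n\in\{0,1\}$ satisfying all its constraints. *)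

theory Defs
  imports Main
begin

definition N_rel :: "(nat \<times> nat \<times> nat) set" where
  "N_rel = {(a,b,c). a \<in> {0,1,2} \<and> b \<in> {0,1,2} \<and> c \<in> {0,1,2} \<and> {a,b,c} \<noteq> {0,1,2}}"

datatype con = EqOr0 nat nat nat | EqOr1 nat nat nat | Is1 nat | Is0 nat

fun con_vars :: "con \<Rightarrow> nat set" where
  "con_vars (EqOr0 i j k) = {i,j,k}"
| "con_vars (EqOr1 i j k) = {i,j,k}"
| "con_vars (Is1 i) = {i}"
| "con_vars (Is0 i) = {i}"

definition wf_instance :: "nat \<Rightarrow> con set \<Rightarrow> bool" where
  "wf_instance n I \<longleftrightarrow> (\<forall>c\<in>I. con_vars c \<subseteq> {1..n})"

fun sat_con :: "(nat \<Rightarrow> nat) \<Rightarrow> con \<Rightarrow> bool" where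
  "sat_con u (EqOr0 i j k) \<longleftrightarrow> u i = u j \<or> u k = 0"
| "sat_con u (EqOr1 i j k) \<longleftrightarrow> u i = u j \<or> u k = 1"
| "sat_con u (Is1 i) \<longleftrightarrow> u i = 1"
| "sat_con u (Is0 i) \<longleftrightarrow> u i = 0"

definition is_solution_I :: "nat \<Rightarrow> con set \<Rightarrow> (nat \<Rightarrow> nat) \<Rightarrow> bool" where
  "is_solution_I n I u \<longleftrightarrow> (\<forall>i\<in>{1..n}. u i \<in> {0,1}) \<and> (\<forall>c\<in>I. sat_con u c)"

datatype var = X | X' | Y' | XV nat | YV nat | ZV nat

definition vars_J :: "nat \<Rightarrow> var set" where
  "vars_J n = {X, X', Y'} \<union> XV ` {1..n} \<union> YV ` {1..n} \<union> ZV ` {1..n}"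

definition Ncons_J :: "nat \<Rightarrow> con set \<Rightarrow> (var \<times> var \<times> var) set" where
  "Ncons_J n I =
     {(X, XV i, YV i) | i. i \<in> {1..n}}
   \<union> {(X', ZV i, YV i) | i. i \<in> {1..n}}
   \<union> {(Y', ZV i, XV i) | i. i \<in> {1..n}}
   \<union> {(t1,t2,t3) | t1 t2 t3. {t1,t2,t3} \<subseteq> {X, X'} \<union> XV ` {1..n}}
   \<union> {(t1,t2,t3) | t1 t2 t3. {t1,t2,t3} \<subseteq> {X, Y'} \<union> YV ` {1..n}}
   \<union> {(t1,t2,t3) | t1 t2 t3. {t1,t2,t3} \<subseteq> {X', Y'} \<union> ZV ` {1..n}}
   \<union> {(XV i, YV j, ZV i) | i j. i \<in> {1..n} \<and> j \<in> {1..n}}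
   \<union> {(XV i, YV j, ZV j) | i j. i \<in> {1..n} \<and> j \<in> {1..n}}
   \<union> {(X, XV i, ZV i) | i. i \<in> {1..n}}
   \<union> {(X, YV i, ZV i) | i. i \<in> {1..n}}
   \<union> {(XV i, XV j, YV k) | i j k. EqOr0 i j k \<in> I}
   \<union> {(YV i, YV j, XV k) | i j k. EqOr1 i j k \<in> I}"

definition Eqcons_J :: "con set \<Rightarrow> (var \<times> var) set" where
  "Eqcons_J I = {(X, XV i) | i. Is1 i \<in> I} \<union> {(X, YV i) | i. Is0 i \<in> I}"

definition is_solution_J :: "nat \<Rightarrow> con set \<Rightarrow> (var \<Rightarrow> nat) \<Rightarrow> bool" where
  "is_solution_J n I f \<longleftrightarrow>
     (\<forall>v\<in>vars_J n. f v \<in> {0,1,2})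
   \<and> (\<forall>(a,b,c)\<in>Ncons_J n I. (f a, f b, f c) \<in> N_rel)
   \<and> (\<forall>(a,b)\<in>Eqcons_J I. f a = f b)"

definition surjective_solution_J :: "nat \<Rightarrow> con set \<Rightarrow> (var \<Rightarrow> nat) \<Rightarrow> bool" where
  "surjective_solution_J n I f \<longleftrightarrow> is_solution_J n I f \<and> f ` vars_J n = {0,1,2}"

end

theory Submission
  imports Defs
begin

text \<open>
  In a surjective solution of J the frame variables x, x', y' take three distinct values: otherwise
  the N-constraints confine all variables to two values (a finite check on one index when exactly
  two frame values coincide, on two indices when all three do). With a distinct frame, the
  constraints on x_i, y_i, z_i leave only the patterns (x, y', y') and (x', x, x'), read as u_i = 1
  and u_i = 0, and C11--C14 become the constraints of I. Conversely, a solution of I is encoded by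
  the frame (0, 1, 2) and these two patterns.
\<close>

lemma N_rel_iff: "(a, b, c) \<in> N_rel \<longleftrightarrow> {a, b, c} \<subseteq> {0, 1, 2} \<and> \<not> distinct [a, b, c]"
proof -
  have "{a, b, c} = {0, 1, 2} \<longleftrightarrow> distinct [a, b, c]" if "{a, b, c} \<subseteq> {0::nat, 1, 2}"
  proof
    assume "{a, b, c} = {0, 1, 2}"
    then have "card (set [a, b, c]) = length [a, b, c]" by simp
    then show "distinct [a, b, c]" by (rule card_distinct)
  next
    assume "distinct [a, b, c]"
    then have "card {a, b, c} = card {0::nat, 1, 2}" by simp
    with that show "{a, b, c} = {0, 1, 2}" by (intro card_subset_eq) auto
  qed
  then show ?thesis unfolding N_rel_def by auto
qed

lemma distinct_if_covers_three:
  assumes "{0, 1, 2} \<subseteq> {a, b, c :: nat}"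
  shows "distinct [a, b, c]"
proof -
  have "length [a, b, c] = card {0::nat, 1, 2}" by simp
  also have "\<dots> \<le> card (set [a, b, c])" using assms by (intro card_mono) auto
  finally show ?thesis using card_length[of "[a, b, c]"] by (intro card_distinct) simp
qed

text \<open>The N-constraints of J on x, x', y' and one index i (C7 and C8 with j = i).\<close>

definition gadget :: "'a \<Rightarrow> 'a \<Rightarrow> 'a \<Rightarrow> 'a \<Rightarrow> 'a \<Rightarrow> 'a \<Rightarrow> bool" where
  "gadget x x' y' xi yi zi \<longleftrightarrow>
     \<not> distinct [x, xi, yi] \<and> \<not> distinct [x', zi, yi] \<and> \<not> distinct [y', zi, xi]
   \<and> \<not> distinct [x, x', xi] \<and> \<not> distinct [x, y', yi] \<and> \<not> distinct [x', y', zi]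
   \<and> \<not> distinct [xi, yi, zi] \<and> \<not> distinct [x, xi, zi] \<and> \<not> distinct [x, yi, zi]"

text \<open>The N-constraints of C4--C8 between two indices i and j.\<close>

definition gadget_link :: "'a \<Rightarrow> 'a \<Rightarrow> 'a \<Rightarrow> 'a \<Rightarrow> 'a \<Rightarrow> 'a \<Rightarrow> 'a \<Rightarrow> 'a \<Rightarrow> 'a \<Rightarrow> bool" where
  "gadget_link x x' y' xi yi zi xj yj zj \<longleftrightarrow>
     \<not> distinct [xi, yj, zi] \<and> \<not> distinct [xi, yj, zj]
   \<and> \<not> distinct [x, xi, xj] \<and> \<not> distinct [x', xi, xj]
   \<and> \<not> distinct [x, yi, yj] \<and> \<not> distinct [y', yi, yj]
   \<and> \<not> distinct [x', zi, zj] \<and> \<not> distinct [y', zi, zj]"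

lemma gadget_values:
  assumes "distinct [x, x', y']" and "gadget x x' y' xi yi zi"
  shows "(xi, yi, zi) = (x, y', y') \<or> (xi, yi, zi) = (x', x, x')"
proof -
  have frame: "x \<noteq> x'" "x \<noteq> y'" "x' \<noteq> y'" using assms(1) by auto
  have yi: "yi = x \<or> yi = y'" and zi: "zi = x' \<or> zi = y'"
    using assms(2) frame unfolding gadget_def by auto
  from assms(2) frame have "xi = x \<or> xi = x'" unfolding gadget_def by auto
  then show ?thesis
  proof
    assume "xi = x"
    then show ?thesis using assms(2) frame yi zi unfolding gadget_def by auto
  next
    assume "xi = x'"
    then show ?thesis using assms(2) frame yi zi unfolding gadget_def by auto
  qed
qed

lemma gadget_within_collapsed_frame:
  fixes x x' y' xi yi zi :: nat
  assumes "{x, x', y', xi, yi, zi} \<subseteq> {0, 1, 2}" and "gadget x x' y' xi yi zi"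
    and "\<not> distinct [x, x', y']" and "\<not> (x' = x \<and> y' = x)"
  shows "{xi, yi, zi} \<subseteq> {x, x', y'}"
proof -
  have exhaustive: "\<forall>x\<in>{0,1,2}. \<forall>x'\<in>{0,1,2}. \<forall>y'\<in>{0,1,2}. \<forall>xi\<in>{0,1,2}. \<forall>yi\<in>{0,1,2}. \<forall>zi\<in>{0::nat,1,2}.
      gadget x x' y' xi yi zi \<longrightarrow> \<not> distinct [x, x', y'] \<longrightarrow> \<not> (x' = x \<and> y' = x) \<longrightarrow>
      {xi, yi, zi} \<subseteq> {x, x', y'}"
    unfolding gadget_def by simp
  show ?thesis using exhaustive[rule_format, of x x' y' xi yi zi] assms by simp
qed

lemma gadgets_over_constant_frame_miss_a_value:
  fixes x xi yi zi xj yj zj :: nat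
  assumes "{x, xi, yi, zi, xj, yj, zj} \<subseteq> {0, 1, 2}"
    and "gadget x x x xi yi zi" and "gadget x x x xj yj zj"
    and "gadget_link x x x xi yi zi xj yj zj" and "gadget_link x x x xj yj zj xi yi zi"
  shows "\<not> {0, 1, 2} \<subseteq> {x, xi, yi, zi, xj, yj, zj}"
proof -
  have exhaustive: "\<forall>x\<in>{0,1,2}. \<forall>xi\<in>{0,1,2}. \<forall>yi\<in>{0,1,2}. \<forall>zi\<in>{0,1,2}.
      \<forall>xj\<in>{0,1,2}. \<forall>yj\<in>{0,1,2}. \<forall>zj\<in>{0,1,2}.
      gadget x x x xi yi zi \<longrightarrow> gadget x x x xj yj zj \<longrightarrow>
      gadget_link x x x xi yi zi xj yj zj \<longrightarrow> gadget_link x x x xj yj zj xi yi zi \<longrightarrow>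
      \<not> {0::nat, 1, 2} \<subseteq> {x, xi, yi, zi, xj, yj, zj}"
    unfolding gadget_def gadget_link_def by simp
  show ?thesis using exhaustive[rule_format, of x xi yi zi xj yj zj] assms by simp
qed

lemma solution_J_not_distinct:
  assumes "is_solution_J n I f" and "(p, q, r) \<in> Ncons_J n I"
  shows "\<not> distinct [f p, f q, f r]"
proof -
  have "\<forall>(a, b, c) \<in> Ncons_J n I. (f a, f b, f c) \<in> N_rel"
    using assms(1) unfolding is_solution_J_def by (elim conjE)
  from bspec[OF this assms(2)] show ?thesis by (simp add: N_rel_iff)
qed

lemma solution_J_eq:
  assumes "is_solution_J n I f" and "(p, q) \<in> Eqcons_J I"
  shows "f p = f q"
proof -
  have "\<forall>(a, b) \<in> Eqcons_J I. f a = f b"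
    using assms(1) unfolding is_solution_J_def by (elim conjE)
  from bspec[OF this assms(2)] show ?thesis by simp
qed

lemma solution_J_gadget:
  assumes "is_solution_J n I f" and "i \<in> {1..n}"
  shows "gadget (f X) (f X') (f Y') (f (XV i)) (f (YV i)) (f (ZV i))"
  unfolding gadget_def
  by (intro conjI solution_J_not_distinct[OF assms(1)]) (use assms(2) in \<open>simp_all add: Ncons_J_def\<close>)

lemma solution_J_gadget_link:
  assumes "is_solution_J n I f" and "i \<in> {1..n}" and "j \<in> {1..n}"
  shows "gadget_link (f X) (f X') (f Y') (f (XV i)) (f (YV i)) (f (ZV i)) (f (XV j)) (f (YV j)) (f (ZV j))"
  unfolding gadget_link_def
  by (intro conjI solution_J_not_distinct[OF assms(1)]) (use assms(2,3) in \<open>simp_all add: Ncons_J_def\<close>)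

lemma vars_J_cases:
  assumes "v \<in> vars_J n"
  obtains "v \<in> {X, X', Y'}" | i where "i \<in> {1..n}" "v \<in> {XV i, YV i, ZV i}"
  using assms unfolding vars_J_def by auto

lemma solution_J_range:
  assumes "is_solution_J n I f"
  shows "f ` vars_J n \<subseteq> {0, 1, 2}"
  using assms unfolding is_solution_J_def image_subset_iff by (elim conjE)

lemma solution_J_gadget_range:
  assumes "is_solution_J n I f" and "i \<in> {1..n}"
  shows "{f X, f X', f Y', f (XV i), f (YV i), f (ZV i)} \<subseteq> {0, 1, 2}"
proof -
  have "f ` {X, X', Y', XV i, YV i, ZV i} \<subseteq> f ` vars_J n"
    using assms(2) by (intro image_mono) (auto simp: vars_J_def)
  also have "\<dots> \<subseteq> {0, 1, 2}" using assms(1) by (rule solution_J_range)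
  finally show ?thesis by simp
qed

lemma surjective_solution_J_value_in_gadget:
  assumes "surjective_solution_J n I f" and "w \<in> {0, 1, 2}" and "w \<notin> {f X, f X', f Y'}"
  obtains i where "i \<in> {1..n}" and "w \<in> {f (XV i), f (YV i), f (ZV i)}"
proof -
  have "w \<in> f ` vars_J n" using assms(1,2) unfolding surjective_solution_J_def by simp
  then obtain v where v: "v \<in> vars_J n" "f v = w" by blast
  from v(1) show ?thesis
  proof (cases rule: vars_J_cases)
    case 1
    with v(2) assms(3) show ?thesis by auto
  next
    case (2 i)
    with v(2) show ?thesis by (auto intro: that)
  qed
qed

lemma surjective_solution_J_frame_not_constant:
  assumes "surjective_solution_J n I f"
  shows "\<not> (f X' = f X \<and> f Y' = f X)"
proof
  assume "f X' = f X \<and> f Y' = f X"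
  then have frame: "f X' = f X" "f Y' = f X" by simp_all
  have sol: "is_solution_J n I f" using assms by (simp add: surjective_solution_J_def)
  have "X \<in> vars_J n" by (simp add: vars_J_def)
  with solution_J_range[OF sol] have "f X \<in> {0, 1, 2}" by blast
  then have three_values: "{0, 1, 2} \<subseteq> {f X, (f X + 1) mod 3, (f X + 2) mod 3}"
    and others: "(f X + 1) mod 3 \<in> {0, 1, 2}" "(f X + 1) mod 3 \<notin> {f X, f X', f Y'}"
      "(f X + 2) mod 3 \<in> {0, 1, 2}" "(f X + 2) mod 3 \<notin> {f X, f X', f Y'}"
    using frame by auto
  obtain i where i: "i \<in> {1..n}" "(f X + 1) mod 3 \<in> {f (XV i), f (YV i), f (ZV i)}"
    using surjective_solution_J_value_in_gadget[OF assms others(1,2)] .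
  obtain j where j: "j \<in> {1..n}" "(f X + 2) mod 3 \<in> {f (XV j), f (YV j), f (ZV j)}"
    using surjective_solution_J_value_in_gadget[OF assms others(3,4)] .
  have "{f X, (f X + 1) mod 3, (f X + 2) mod 3}
      \<subseteq> {f X, f (XV i), f (YV i), f (ZV i), f (XV j), f (YV j), f (ZV j)}"
    using i(2) j(2) by auto
  with three_values have covering:
    "{0, 1, 2} \<subseteq> {f X, f (XV i), f (YV i), f (ZV i), f (XV j), f (YV j), f (ZV j)}"
    by (rule subset_trans)
  have "\<not> {0, 1, 2} \<subseteq> {f X, f (XV i), f (YV i), f (ZV i), f (XV j), f (YV j), f (ZV j)}"
  proof (rule gadgets_over_constant_frame_miss_a_value)
    show "{f X, f (XV i), f (YV i), f (ZV i), f (XV j), f (YV j), f (ZV j)} \<subseteq> {0, 1, 2}"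
      using solution_J_gadget_range[OF sol i(1)] solution_J_gadget_range[OF sol j(1)] by auto
  qed (use solution_J_gadget[OF sol] solution_J_gadget_link[OF sol] i(1) j(1) in \<open>simp_all add: frame\<close>)
  with covering show False by contradiction
qed

lemma surjective_solution_J_collapsed_frame_constant:
  assumes "surjective_solution_J n I f" and collapsed: "\<not> distinct [f X, f X', f Y']"
  shows "f X' = f X \<and> f Y' = f X"
proof (rule ccontr)
  assume not_constant: "\<not> (f X' = f X \<and> f Y' = f X)"
  have sol: "is_solution_J n I f" and onto: "f ` vars_J n = {0, 1, 2}"
    using assms(1) unfolding surjective_solution_J_def by auto
  have "f ` vars_J n \<subseteq> {f X, f X', f Y'}"
  proof (rule image_subsetI)
    fix v assume "v \<in> vars_J n"
    then show "f v \<in> {f X, f X', f Y'}"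
    proof (cases rule: vars_J_cases)
      case (2 i)
      with gadget_within_collapsed_frame[OF solution_J_gadget_range[OF sol 2(1)]
          solution_J_gadget[OF sol 2(1)] collapsed not_constant]
      show ?thesis by auto
    qed auto
  qed
  then have "{0, 1, 2} \<subseteq> {f X, f X', f Y'}" by (simp only: onto)
  then have "distinct [f X, f X', f Y']" by (rule distinct_if_covers_three)
  with collapsed show False by simp
qed

lemma surjective_solution_J_frame_distinct:
  assumes "surjective_solution_J n I f"
  shows "distinct [f X, f X', f Y']"
  using surjective_solution_J_collapsed_frame_constant[OF assms]
    surjective_solution_J_frame_not_constant[OF assms] by blast

lemma decode_solution:
  assumes "wf_instance n I" and "surjective_solution_J n I f"
  shows "is_solution_I n I (\<lambda>i. if f (XV i) = f X then 1 else 0)" (is "is_solution_I n I ?u")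
proof -
  have sol: "is_solution_J n I f" using assms(2) by (simp add: surjective_solution_J_def)
  have frame: "distinct [f X, f X', f Y']" using assms(2) by (rule surjective_solution_J_frame_distinct)
  have xv: "f (XV i) \<in> {f X, f X'}"
    and yv: "f (YV i) = (if f (XV i) = f X then f Y' else f X)" if "i \<in> {1..n}" for i
    using gadget_values[OF frame solution_J_gadget[OF sol that]] frame by auto
  have "sat_con ?u c" if "c \<in> I" for c
  proof -
    have indices: "con_vars c \<subseteq> {1..n}" using assms(1) that unfolding wf_instance_def by blast
    show ?thesis
    proof (cases c)
      case (EqOr0 i j k)
      then have "i \<in> {1..n}" "j \<in> {1..n}" "k \<in> {1..n}" using indices by simp_all
      note shapes = xv[OF this(1)] xv[OF this(2)] xv[OF this(3)] yv[OF this(1)] yv[OF this(2)] yv[OF this(3)]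
      have "(XV i, XV j, YV k) \<in> Ncons_J n I" using that EqOr0 unfolding Ncons_J_def by blast
      from solution_J_not_distinct[OF sol this] show ?thesis
        using shapes frame EqOr0 by (auto split: if_splits)
    next
      case (EqOr1 i j k)
      then have "i \<in> {1..n}" "j \<in> {1..n}" "k \<in> {1..n}" using indices by simp_all
      note shapes = xv[OF this(1)] xv[OF this(2)] xv[OF this(3)] yv[OF this(1)] yv[OF this(2)] yv[OF this(3)]
      have "(YV i, YV j, XV k) \<in> Ncons_J n I" using that EqOr1 unfolding Ncons_J_def by blast
      from solution_J_not_distinct[OF sol this] show ?thesis
        using shapes frame EqOr1 by (auto split: if_splits)
    next
      case (Is1 i)
      have "(X, XV i) \<in> Eqcons_J I" using that Is1 unfolding Eqcons_J_def by blast
      from solution_J_eq[OF sol this] show ?thesis using Is1 by auto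
    next
      case (Is0 i)
      have "(X, YV i) \<in> Eqcons_J I" using that Is0 unfolding Eqcons_J_def by blast
      from solution_J_eq[OF sol this] show ?thesis using yv[of i] indices frame Is0 by auto
    qed
  qed
  then show ?thesis unfolding is_solution_I_def by simp
qed

definition encode :: "(nat \<Rightarrow> nat) \<Rightarrow> var \<Rightarrow> nat" where
  "encode u v = (case v of X \<Rightarrow> 0 | X' \<Rightarrow> 1 | Y' \<Rightarrow> 2
     | XV i \<Rightarrow> if u i = 1 then 0 else 1
     | YV i \<Rightarrow> if u i = 1 then 2 else 0
     | ZV i \<Rightarrow> if u i = 1 then 2 else 1)"

lemma encode_surjective_solution:
  assumes "is_solution_I n I u"
  shows "surjective_solution_J n I (encode u)"
proof -
  have sat: "\<forall>c\<in>I. sat_con u c" using assms unfolding is_solution_I_def by blast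
  have range: "encode u v \<in> {0, 1, 2}" for v
    unfolding encode_def by (simp split: var.split)
  have "\<not> distinct [encode u p, encode u q, encode u r]" if "(p, q, r) \<in> Ncons_J n I" for p q r
    using sat that unfolding Ncons_J_def by (auto simp: encode_def split: var.splits if_splits)
  then have N: "(encode u p, encode u q, encode u r) \<in> N_rel" if "(p, q, r) \<in> Ncons_J n I" for p q r
    using range that by (simp add: N_rel_iff)
  have Eq: "encode u p = encode u q" if "(p, q) \<in> Eqcons_J I" for p q
    using sat that unfolding Eqcons_J_def by (auto simp: encode_def)
  have "{0, 1, 2} = {encode u X, encode u X', encode u Y'}" by (simp add: encode_def)
  also have "\<dots> \<subseteq> encode u ` vars_J n" by (simp add: vars_J_def)
  finally have "encode u ` vars_J n = {0, 1, 2}"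
    using image_subsetI[OF range] by (rule subset_antisym[rotated])
  with range N Eq show ?thesis
    unfolding surjective_solution_J_def is_solution_J_def by blast
qed

theorem lemma3p2:
  fixes n :: nat and I :: "con set"
  assumes "wf_instance n I"
  shows "(\<exists>u. is_solution_I n I u) \<longleftrightarrow> (\<exists>f. surjective_solution_J n I f)"
  using encode_surjective_solution decode_solution[OF assms] by blast

end
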